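(* Assume $b_1<n^*$ and $b_2<m^*$. Then: (1) The equilibrium payoffs of both players are the same in all Nash equilibria of $\Gamma(b_1,b_2)$, and for every Nash equilibrium $(\sigma^{1*},\sigma^{2*})$, $$\frac{b_1b_2}{n^*}\le U_1(\sigma^{1*},\sigma^{2*})\le\min\Bigl\{\frac{b_1b_2}{m^*},b_2\Bigr\},\qquad \max\Bigl\{0,b_2\Bigl(1-\frac{b_1}{m^*}\Bigr)\Bigr\}\le U_2(\sigma^{1*},\sigma^{2*})\le b_2\Bigl(1-\frac{b_1}{n^*}\Bigr).$$ (2) The expected detection rate $r(\sigma^* )$ takes the same value in all Nash equilibria $\sigma^*$ of $\Gamma(b_1,b_2)$, and $\frac{b_1}{n^*}\le r(\sigma^* )\le\min\{\frac{b_1}{m^*},1\}$.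
   Context: Detection model: finite nonempty sets $\mathcal V$, $\mathcal E$, monitoring sets $\mathcal C_i\subseteq\mathcal E$ ($i\in\mathcal V$) with every $e\in\mathcal E$ in some $\mathcal C_i$; $\mathcal C_S=\bigcup_{i\in S}\mathcal C_i$; $F(S,T)=|\mathcal C_S\cap T|$. Set cover: $S\subseteq\mathcal V$ with $\mathcal C_S=\mathcal E$; $n^*$ = minimum size of a set cover. Set packing: $T\subseteq\mathcal E$ with $|\mathcal C_i\cap T|\le1$ for all $i$; $m^*$ = maximum size of a set packing. Game $\Gamma(b_1,b_2)$ ($b_1,b_2$ positive integers): $\mathcal A_1=\{S\subseteq\mathcal V:|S|\le b_1\}$, $\mathcal A_2=\{T\subseteq\mathcal E:|T|\le b_2\}$; mixed strategies $\sigma^1\in\Delta(\mathcal A_1)$, $\sigma^2\in\Delta(\mathcal A_2)$ (independent); payoffs $U_1=\mathbb E[F(S,T)]$, $U_2=\mathbb E[|T|]-\mathbb E[F(S,T)]$; Nash equilibrium in mixed strategies as usual. The expected detection rate of a profile $\sigma=(\sigma^1,\sigma^2)$ whose attack strategy is supported on nonempty sets is $r(\sigma)=\mathbb E_{S\sim\sigma^1,T\sim\sigma^2}\bigl[F(S,T)/|T|\bigr]$ (in the equilibria considered here all attack plans in the support have size $b_2$). *)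

theory Defs
  imports "HOL-Probability.Probability"
begin

definition detection_model :: "'v set \<Rightarrow> 'e set \<Rightarrow> ('v \<Rightarrow> 'e set) \<Rightarrow> bool" where
  "detection_model V E C \<longleftrightarrow> finite V \<and> finite E \<and> V \<noteq> {} \<and> E \<noteq> {}
     \<and> (\<forall>i\<in>V. C i \<subseteq> E) \<and> (\<forall>e\<in>E. \<exists>i\<in>V. e \<in> C i)"

definition CS :: "('v \<Rightarrow> 'e set) \<Rightarrow> 'v set \<Rightarrow> 'e set" where
  "CS C S = (\<Union>i\<in>S. C i)"

definition detF :: "('v \<Rightarrow> 'e set) \<Rightarrow> 'v set \<Rightarrow> 'e set \<Rightarrow> nat" where
  "detF C S T = card (CS C S \<inter> T)"

definition set_cover :: "'v set \<Rightarrow> 'e set \<Rightarrow> ('v \<Rightarrow> 'e set) \<Rightarrow> 'v set \<Rightarrow> bool" where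
  "set_cover V E C S \<longleftrightarrow> S \<subseteq> V \<and> CS C S = E"

definition set_packing :: "'v set \<Rightarrow> 'e set \<Rightarrow> ('v \<Rightarrow> 'e set) \<Rightarrow> 'e set \<Rightarrow> bool" where
  "set_packing V E C T \<longleftrightarrow> T \<subseteq> E \<and> (\<forall>i\<in>V. card (C i \<inter> T) \<le> 1)"

definition n_star :: "'v set \<Rightarrow> 'e set \<Rightarrow> ('v \<Rightarrow> 'e set) \<Rightarrow> nat" where
  "n_star V E C = Min {card S | S. set_cover V E C S}"

definition m_star :: "'v set \<Rightarrow> 'e set \<Rightarrow> ('v \<Rightarrow> 'e set) \<Rightarrow> nat" where
  "m_star V E C = Max {card T | T. set_packing V E C T}"

definition A1 :: "'v set \<Rightarrow> nat \<Rightarrow> 'v set set" where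
  "A1 V b1 = {S. S \<subseteq> V \<and> card S \<le> b1}"

definition A2 :: "'e set \<Rightarrow> nat \<Rightarrow> 'e set set" where
  "A2 E b2 = {T. T \<subseteq> E \<and> card T \<le> b2}"

definition U1 :: "('v \<Rightarrow> 'e set) \<Rightarrow> 'v set pmf \<Rightarrow> 'e set pmf \<Rightarrow> real" where
  "U1 C \<sigma>1 \<sigma>2 = measure_pmf.expectation (pair_pmf \<sigma>1 \<sigma>2) (\<lambda>(S, T). real (detF C S T))"

definition U2 :: "('v \<Rightarrow> 'e set) \<Rightarrow> 'v set pmf \<Rightarrow> 'e set pmf \<Rightarrow> real" where
  "U2 C \<sigma>1 \<sigma>2 = measure_pmf.expectation \<sigma>2 (\<lambda>T. real (card T)) - U1 C \<sigma>1 \<sigma>2"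

definition detection_rate :: "('v \<Rightarrow> 'e set) \<Rightarrow> 'v set pmf \<Rightarrow> 'e set pmf \<Rightarrow> real" where
  "detection_rate C \<sigma>1 \<sigma>2 =
     measure_pmf.expectation (pair_pmf \<sigma>1 \<sigma>2) (\<lambda>(S, T). real (detF C S T) / real (card T))"

definition is_NE :: "'v set \<Rightarrow> 'e set \<Rightarrow> ('v \<Rightarrow> 'e set) \<Rightarrow> nat \<Rightarrow> nat
                     \<Rightarrow> 'v set pmf \<Rightarrow> 'e set pmf \<Rightarrow> bool" where
  "is_NE V E C b1 b2 \<sigma>1 \<sigma>2 \<longleftrightarrow>
     set_pmf \<sigma>1 \<subseteq> A1 V b1 \<and> set_pmf \<sigma>2 \<subseteq> A2 E b2
     \<and> (\<forall>\<tau>. set_pmf \<tau> \<subseteq> A1 V b1 \<longrightarrow> U1 C \<tau> \<sigma>2 \<le> U1 C \<sigma>1 \<sigma>2)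
     \<and> (\<forall>\<tau>. set_pmf \<tau> \<subseteq> A2 E b2 \<longrightarrow> U2 C \<sigma>1 \<tau> \<le> U2 C \<sigma>1 \<sigma>2)"

end

theory Submission
  imports Defs
begin

text \<open>At an equilibrium with \<open>b1 < n*\<close> and \<open>b2 < m*\<close> every attack in the support uses
exactly \<open>b2\<close> edges. Otherwise the attacker would, by best response, always include every edge
the defender does not monitor surely, and there would be fewer than \<open>b2\<close> of them; an exchange
argument (swap a defending vertex for one monitoring an uncovered edge) then shows that a defence
\<open>S\<close> in the support satisfies \<open>|S| + |E - C_S| \<le> b2\<close>, while a maximum packing has at most
\<open>|S| + |E - C_S|\<close> edges, contradicting \<open>b2 < m*\<close>. Hence \<open>U1 + U2 = b2\<close> at every
equilibrium, the game is effectively constant-sum, the equilibrium payoff is unique, and the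
detection rate equals \<open>U1 / b2\<close>. The bounds come from averaging the equilibrium inequalities:
over the \<open>b1\<close>-subsets of a minimum cover, each of which monitors a given edge with frequency
\<open>b1 / n*\<close>, and over the \<open>b2\<close>-subsets of a maximum packing, of which a defence of \<open>b1\<close>
vertices detects on average at most \<open>b1 b2 / m*\<close> edges.\<close>

lemma card_subsets_containing:
  assumes "finite A" and "x \<in> A" and "0 < k"
  shows "card {S. S \<subseteq> A \<and> card S = k \<and> x \<in> S} = (card A - 1) choose (k - 1)"
proof -
  have fin: "finite S" if "S \<subseteq> A" for S
    using that assms(1) by (rule finite_subset)
  have card_insert: "card (insert x S) = k" if "S \<subseteq> A - {x}" and "card S = k - 1" for S
  proof -
    have "finite S" and "x \<notin> S"
      using that(1) fin by auto
    then show ?thesis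
      using that(2) assms(3) by simp
  qed
  have "bij_betw (\<lambda>S. S - {x}) {S. S \<subseteq> A \<and> card S = k \<and> x \<in> S}
          {S. S \<subseteq> A - {x} \<and> card S = k - 1}"
  proof (rule bij_betw_byWitness[where f' = "insert x"])
    show "(\<lambda>S. S - {x}) ` {S. S \<subseteq> A \<and> card S = k \<and> x \<in> S} \<subseteq> {S. S \<subseteq> A - {x} \<and> card S = k - 1}"
      using fin by auto
    show "insert x ` {S. S \<subseteq> A - {x} \<and> card S = k - 1} \<subseteq> {S. S \<subseteq> A \<and> card S = k \<and> x \<in> S}"
      using assms(2) card_insert by auto
  qed auto
  then have "card {S. S \<subseteq> A \<and> card S = k \<and> x \<in> S} = card {S. S \<subseteq> A - {x} \<and> card S = k - 1}"
    by (rule bij_betw_same_card)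
  also have "\<dots> = (card A - 1) choose (k - 1)"
    using assms(1,2) by (simp add: n_subsets)
  finally show ?thesis .
qed

lemma sum_card_Int_swap:
  assumes "finite X" and "finite T"
  shows "(\<Sum>S\<in>X. card (f S \<inter> T)) = (\<Sum>e\<in>T. card {S\<in>X. e \<in> f S})"
proof -
  have "(\<Sum>S\<in>X. card (f S \<inter> T)) = (\<Sum>S\<in>X. \<Sum>e\<in>T. if e \<in> f S then 1 else 0)"
    using assms(2) by (simp add: sum.If_cases Int_commute)
  also have "\<dots> = (\<Sum>e\<in>T. \<Sum>S\<in>X. if e \<in> f S then 1 else 0)"
    by (rule sum.swap)
  also have "\<dots> = (\<Sum>e\<in>T. card {S\<in>X. e \<in> f S})"
    using assms(1) by (simp add: sum.If_cases Collect_conj_eq Int_commute)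
  finally show ?thesis .
qed

lemma finite_subsets_of_card: "finite A \<Longrightarrow> finite {S. S \<subseteq> A \<and> card S = k}"
  by (rule finite_subset[of _ "Pow A"]) auto

lemma sum_detF_subsets_of_cover_ge:
  assumes "finite Sx" and "T \<subseteq> CS C Sx" and "finite T" and "0 < k"
  shows "card T * ((card Sx - 1) choose (k - 1)) \<le> (\<Sum>S | S \<subseteq> Sx \<and> card S = k. detF C S T)"
proof -
  let ?X = "{S. S \<subseteq> Sx \<and> card S = k}"
  have finX: "finite ?X"
    using assms(1) by (rule finite_subsets_of_card)
  have "card T * ((card Sx - 1) choose (k - 1)) = (\<Sum>e\<in>T. (card Sx - 1) choose (k - 1))"
    by simp
  also have "\<dots> \<le> (\<Sum>e\<in>T. card {S\<in>?X. e \<in> CS C S})"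
  proof (rule sum_mono)
    fix e assume "e \<in> T"
    then obtain j where j: "j \<in> Sx" "e \<in> C j"
      using assms(2) by (auto simp: CS_def)
    have "{S. S \<subseteq> Sx \<and> card S = k \<and> j \<in> S} \<subseteq> {S\<in>?X. e \<in> CS C S}"
      using j by (auto simp: CS_def)
    then have "card {S. S \<subseteq> Sx \<and> card S = k \<and> j \<in> S} \<le> card {S\<in>?X. e \<in> CS C S}"
      by (intro card_mono) (auto intro: finite_subset[OF _ finX])
    then show "(card Sx - 1) choose (k - 1) \<le> card {S\<in>?X. e \<in> CS C S}"
      using card_subsets_containing[OF assms(1) j(1) assms(4)] by simp
  qed
  also have "\<dots> = (\<Sum>S\<in>?X. detF C S T)"
    unfolding detF_def
    using finX assms(3) by (rule sum_card_Int_swap[symmetric])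
  finally show ?thesis .
qed

lemma sum_detF_subsets_of_packing_le:
  assumes "finite P" and "finite S" and "\<forall>i\<in>S. card (C i \<inter> P) \<le> 1" and "0 < k"
  shows "(\<Sum>T | T \<subseteq> P \<and> card T = k. detF C S T) \<le> card S * ((card P - 1) choose (k - 1))"
proof -
  let ?Y = "{T. T \<subseteq> P \<and> card T = k}" and ?M = "(card P - 1) choose (k - 1)"
  have finY: "finite ?Y"
    using assms(1) by (rule finite_subsets_of_card)
  have per_vertex: "(\<Sum>T\<in>?Y. card (C i \<inter> T)) \<le> ?M" if "i \<in> S" for i
  proof -
    have "(\<Sum>T\<in>?Y. card (C i \<inter> T)) = (\<Sum>T\<in>?Y. card (T \<inter> (C i \<inter> P)))"
      by (rule sum.cong) (auto intro: arg_cong[where f = card])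
    also have "\<dots> = (\<Sum>e\<in>C i \<inter> P. card {T\<in>?Y. e \<in> T})"
      using sum_card_Int_swap[OF finY, of "C i \<inter> P" "\<lambda>T. T"] assms(1) by simp
    also have "\<dots> = (\<Sum>e\<in>C i \<inter> P. ?M)"
    proof (rule sum.cong[OF refl])
      fix e assume "e \<in> C i \<inter> P"
      moreover have "{T\<in>?Y. e \<in> T} = {T. T \<subseteq> P \<and> card T = k \<and> e \<in> T}"
        by auto
      ultimately show "card {T\<in>?Y. e \<in> T} = ?M"
        using card_subsets_containing[OF assms(1) _ assms(4)] by simp
    qed
    also have "\<dots> = card (C i \<inter> P) * ?M"
      by simp
    also have "\<dots> \<le> ?M"
      using assms(3) that by simp
    finally show ?thesis .
  qed
  have "(\<Sum>T\<in>?Y. detF C S T) \<le> (\<Sum>T\<in>?Y. \<Sum>i\<in>S. card (C i \<inter> T))"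
  proof (rule sum_mono)
    fix T
    have "CS C S \<inter> T = (\<Union>i\<in>S. C i \<inter> T)"
      by (auto simp: CS_def)
    then show "detF C S T \<le> (\<Sum>i\<in>S. card (C i \<inter> T))"
      unfolding detF_def using card_UN_le[OF assms(2)] by metis
  qed
  also have "\<dots> = (\<Sum>i\<in>S. \<Sum>T\<in>?Y. card (C i \<inter> T))"
    by (rule sum.swap)
  also have "\<dots> \<le> card S * ?M"
    using sum_mono[OF per_vertex] by simp
  finally show ?thesis .
qed

lemma card_packing_le:
  assumes "set_packing V E C P" and "finite E" and "finite S" and "S \<subseteq> V"
  shows "card P \<le> card S + card (E - CS C S)"
proof -
  have PE: "P \<subseteq> E" and unique: "\<forall>i\<in>V. card (C i \<inter> P) \<le> 1"
    using assms(1) by (auto simp: set_packing_def)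
  have finP: "finite P"
    using PE assms(2) by (rule finite_subset)
  have "card (P \<inter> CS C S) = card (\<Union>i\<in>S. C i \<inter> P)"
    by (rule arg_cong[where f = card]) (auto simp: CS_def)
  also have "\<dots> \<le> (\<Sum>i\<in>S. card (C i \<inter> P))"
    using assms(3) by (rule card_UN_le)
  also have "\<dots> \<le> card S"
    using sum_mono[of S "\<lambda>i. card (C i \<inter> P)" "\<lambda>_. 1"] unique assms(4) by auto
  finally have "card (P \<inter> CS C S) \<le> card S" .
  moreover have "card (P - CS C S) \<le> card (E - CS C S)"
    using PE assms(2) by (intro card_mono) auto
  moreover have "card P = card (P \<inter> CS C S) + card (P - CS C S)"
    using finP by (rule card_Int_Diff)
  ultimately show ?thesis
    by linarith
qed

definition private_cover :: "('v \<Rightarrow> 'e set) \<Rightarrow> 'v set \<Rightarrow> 'v \<Rightarrow> 'e set" where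
  "private_cover C S i = CS C S - CS C (S - {i})"

lemma private_cover_disjoint:
  assumes "i \<noteq> j"
  shows "private_cover C S i \<inter> private_cover C S j = {}"
  using assms by (auto simp: private_cover_def CS_def)

lemma sum_card_private_cover_le:
  assumes "finite S" and "finite T"
  shows "(\<Sum>i\<in>S. card (private_cover C S i \<inter> T)) \<le> detF C S T"
proof -
  have "(\<Sum>i\<in>S. card (private_cover C S i \<inter> T)) = card (\<Union>i\<in>S. private_cover C S i \<inter> T)"
    using assms by (subst card_UN_disjoint) (auto dest: private_cover_disjoint)
  also have "\<dots> \<le> detF C S T"
    unfolding detF_def using assms(2) by (intro card_mono) (auto simp: private_cover_def)
  finally show ?thesis .
qed

lemma detF_exchange:
  assumes "finite T" and "k \<in> T" and "k \<in> C w" and "k \<notin> CS C S"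
  shows "detF C S T + 1 \<le> detF C (insert w (S - {i})) T + card (private_cover C S i \<inter> T)"
proof -
  let ?R = "CS C (S - {i}) \<inter> T"
  have "CS C S \<inter> T \<subseteq> (private_cover C S i \<inter> T) \<union> ?R"
    by (auto simp: private_cover_def)
  then have "detF C S T \<le> card ((private_cover C S i \<inter> T) \<union> ?R)"
    unfolding detF_def using assms(1) by (intro card_mono) auto
  also have "\<dots> \<le> card (private_cover C S i \<inter> T) + card ?R"
    by (rule card_Un_le)
  finally have covered: "detF C S T \<le> card (private_cover C S i \<inter> T) + card ?R" .
  have "k \<notin> ?R"
    using assms(4) by (auto simp: CS_def)
  then have "card ?R + 1 = card (insert k ?R)"
    using assms(1) by simp
  also have "\<dots> \<le> detF C (insert w (S - {i})) T"
    unfolding detF_def using assms(1-3) by (intro card_mono) (auto simp: CS_def)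
  finally show ?thesis
    using covered by linarith
qed

lemma expectation_pair_pmf_finite:
  fixes g :: "'a \<Rightarrow> 'b \<Rightarrow> real"
  assumes "finite A" and "finite B" and "set_pmf p \<subseteq> A" and "set_pmf q \<subseteq> B"
  shows "measure_pmf.expectation (pair_pmf p q) (\<lambda>(x, y). g x y)
           = (\<Sum>x\<in>A. \<Sum>y\<in>B. pmf p x * pmf q y * g x y)"
proof -
  have "measure_pmf.expectation (pair_pmf p q) (\<lambda>(x, y). g x y)
          = (\<Sum>z\<in>A \<times> B. (case z of (x, y) \<Rightarrow> g x y) * pmf (pair_pmf p q) z)"
    using assms by (intro integral_measure_pmf_real) auto
  also have "\<dots> = (\<Sum>z\<in>A \<times> B. case z of (x, y) \<Rightarrow> pmf p x * pmf q y * g x y)"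
    by (intro sum.cong) (auto simp: pmf_pair)
  also have "\<dots> = (\<Sum>x\<in>A. \<Sum>y\<in>B. pmf p x * pmf q y * g x y)"
    by (simp add: sum.cartesian_product)
  finally show ?thesis .
qed

lemma sum_pmf_mult_mono:
  fixes f g :: "'a \<Rightarrow> real"
  assumes "\<And>x. x \<in> set_pmf p \<Longrightarrow> f x \<le> g x"
  shows "(\<Sum>x\<in>A. pmf p x * f x) \<le> (\<Sum>x\<in>A. pmf p x * g x)"
proof (rule sum_mono)
  fix x
  show "pmf p x * f x \<le> pmf p x * g x"
    using assms[of x] by (cases "x \<in> set_pmf p") (auto simp: mult_left_mono set_pmf_iff)
qed

lemma sum_pmf_mult_const:
  assumes "finite A" and "set_pmf p \<subseteq> A"
  shows "(\<Sum>x\<in>A. pmf p x * c) = c"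
  using sum_pmf_eq_1[OF assms] by (simp add: sum_distrib_right[symmetric])

lemma sum_pmf_mult_eq_bound_on_support:
  fixes f :: "'a \<Rightarrow> real"
  assumes "finite A" and "set_pmf p \<subseteq> A" and "\<And>x. x \<in> A \<Longrightarrow> f x \<le> c"
    and "(\<Sum>x\<in>A. pmf p x * f x) = c" and "x \<in> set_pmf p"
  shows "f x = c"
proof -
  have "(\<Sum>y\<in>A. pmf p y * (c - f y)) = (\<Sum>y\<in>A. pmf p y * c) - (\<Sum>y\<in>A. pmf p y * f y)"
    by (simp add: right_diff_distrib sum_subtractf)
  also have "\<dots> = 0"
    using assms(4) sum_pmf_mult_const[OF assms(1,2)] by simp
  finally have zero: "(\<Sum>y\<in>A. pmf p y * (c - f y)) = 0" .
  have nonneg: "0 \<le> pmf p y * (c - f y)" if "y \<in> A" for y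
    using assms(3)[OF that] by (intro mult_nonneg_nonneg) simp_all
  have "\<forall>y\<in>A. pmf p y * (c - f y) = 0"
    using sum_nonneg_eq_0_iff[OF assms(1) nonneg] zero by simp
  then have "pmf p x * (c - f x) = 0"
    using assms(2,5) by blast
  then show ?thesis
    using assms(5) by (simp add: set_pmf_iff)
qed

lemma expectation_card_eq:
  assumes "\<forall>T\<in>set_pmf q. card T = c"
  shows "measure_pmf.expectation q (\<lambda>T. real (card T)) = real c"
proof -
  have "measure_pmf.expectation q (\<lambda>T. real (card T)) = measure_pmf.expectation q (\<lambda>_. real c)"
    using assms by (intro integral_cong_AE) (auto simp: AE_measure_pmf_iff)
  then show ?thesis
    by simp
qed

lemma detection_rate_eq_U1_div:
  assumes "\<forall>T\<in>set_pmf q. card T = c"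
  shows "detection_rate C p q = U1 C p q / real c"
proof -
  have "detection_rate C p q
          = measure_pmf.expectation (pair_pmf p q) (\<lambda>(S, T). real (detF C S T) / real c)"
    unfolding detection_rate_def using assms
    by (intro integral_cong_AE) (auto simp: AE_measure_pmf_iff)
  then show ?thesis
    by (simp add: U1_def case_prod_unfold)
qed

lemma U2_eq_minus_U1:
  assumes "\<forall>T\<in>set_pmf q. card T = c"
  shows "U2 C p q = real c - U1 C p q"
  using expectation_card_eq[OF assms] by (simp add: U2_def)

locale detection_game =
  fixes V :: "'v set" and E :: "'e set" and C :: "'v \<Rightarrow> 'e set" and b1 b2 :: nat
  assumes model: "detection_model V E C"
begin

lemma finite_V: "finite V" and finite_E: "finite E"
  and monitor_subset: "i \<in> V \<Longrightarrow> C i \<subseteq> E" and monitored: "e \<in> E \<Longrightarrow> \<exists>i\<in>V. e \<in> C i"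
  using model by (auto simp: detection_model_def)

lemma finite_A1: "finite (A1 V b1)"
  by (rule finite_subset[of _ "Pow V"]) (auto simp: A1_def finite_V)

lemma finite_A2: "finite (A2 E b2)"
  by (rule finite_subset[of _ "Pow E"]) (auto simp: A2_def finite_E)

lemma finite_defense: "S \<in> A1 V b1 \<Longrightarrow> finite S"
  using finite_V by (auto simp: A1_def intro: finite_subset)

lemma finite_attack: "T \<in> A2 E b2 \<Longrightarrow> finite T"
  using finite_E by (auto simp: A2_def intro: finite_subset)

lemma finite_cover_sizes: "finite {card S | S. set_cover V E C S}"
  by (rule finite_subset[of _ "card ` Pow V"]) (auto simp: set_cover_def finite_V)

lemma n_star_le_card: "set_cover V E C S \<Longrightarrow> n_star V E C \<le> card S"
  unfolding n_star_def using finite_cover_sizes by (rule Min_le) auto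

lemma exists_min_cover: "\<exists>S. set_cover V E C S \<and> card S = n_star V E C"
proof -
  have "set_cover V E C V"
    using monitor_subset monitored by (auto simp: set_cover_def CS_def)
  then have "n_star V E C \<in> {card S | S. set_cover V E C S}"
    unfolding n_star_def by (intro Min_in finite_cover_sizes) auto
  then show ?thesis
    by auto
qed

lemma exists_max_packing: "\<exists>P. set_packing V E C P \<and> card P = m_star V E C"
proof -
  have "set_packing V E C {}"
    by (simp add: set_packing_def)
  moreover have "finite {card P | P. set_packing V E C P}"
    by (rule finite_subset[of _ "card ` Pow E"]) (auto simp: set_packing_def finite_E)
  ultimately have "m_star V E C \<in> {card P | P. set_packing V E C P}"
    unfolding m_star_def by (intro Max_in) auto
  then show ?thesis
    by auto
qed

definition defense_payoff :: "'e set pmf \<Rightarrow> 'v set \<Rightarrow> real" where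
  "defense_payoff q S = (\<Sum>T\<in>A2 E b2. pmf q T * detF C S T)"

definition detection_prob :: "'v set pmf \<Rightarrow> 'e \<Rightarrow> real" where
  "detection_prob p e = (\<Sum>S\<in>A1 V b1. pmf p S * (if e \<in> CS C S then 1 else 0))"

definition attack_payoff :: "'v set pmf \<Rightarrow> 'e set \<Rightarrow> real" where
  "attack_payoff p T = (\<Sum>e\<in>T. 1 - detection_prob p e)"

lemma U1_eq_sum:
  assumes "set_pmf p \<subseteq> A1 V b1" and "set_pmf q \<subseteq> A2 E b2"
  shows "U1 C p q = (\<Sum>S\<in>A1 V b1. \<Sum>T\<in>A2 E b2. pmf p S * pmf q T * detF C S T)"
  unfolding U1_def using finite_A1 finite_A2 assms by (rule expectation_pair_pmf_finite)

lemma U1_eq_sum_defense_payoff: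
  assumes "set_pmf p \<subseteq> A1 V b1" and "set_pmf q \<subseteq> A2 E b2"
  shows "U1 C p q = (\<Sum>S\<in>A1 V b1. pmf p S * defense_payoff q S)"
  unfolding U1_eq_sum[OF assms] defense_payoff_def by (simp add: sum_distrib_left mult_ac)

lemma sum_pmf_detF_eq:
  assumes "finite T"
  shows "(\<Sum>S\<in>A1 V b1. pmf p S * detF C S T) = card T - attack_payoff p T"
proof -
  have "(\<Sum>S\<in>A1 V b1. pmf p S * detF C S T)
          = (\<Sum>S\<in>A1 V b1. pmf p S * (\<Sum>e\<in>T. if e \<in> CS C S then 1 else 0))"
    using assms by (simp add: detF_def sum.If_cases Int_commute)
  also have "\<dots> = (\<Sum>e\<in>T. detection_prob p e)"
    unfolding detection_prob_def by (subst sum.swap) (simp add: sum_distrib_left)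
  finally show ?thesis
    by (simp add: attack_payoff_def sum_subtractf)
qed

lemma U1_eq_sum_attack_payoff:
  assumes "set_pmf p \<subseteq> A1 V b1" and "set_pmf q \<subseteq> A2 E b2"
  shows "U1 C p q = (\<Sum>T\<in>A2 E b2. pmf q T * (card T - attack_payoff p T))"
proof -
  have "U1 C p q = (\<Sum>T\<in>A2 E b2. pmf q T * (\<Sum>S\<in>A1 V b1. pmf p S * detF C S T))"
    unfolding U1_eq_sum[OF assms] by (subst sum.swap) (simp add: sum_distrib_left mult_ac)
  then show ?thesis
    using finite_attack sum_pmf_detF_eq by simp
qed

lemma U2_eq_sum_attack_payoff:
  assumes "set_pmf p \<subseteq> A1 V b1" and "set_pmf q \<subseteq> A2 E b2"
  shows "U2 C p q = (\<Sum>T\<in>A2 E b2. pmf q T * attack_payoff p T)"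
proof -
  have "measure_pmf.expectation q (\<lambda>T. real (card T)) = (\<Sum>T\<in>A2 E b2. pmf q T * card T)"
    using finite_A2 assms(2) by (subst integral_measure_pmf_real) (auto simp: mult_ac)
  then show ?thesis
    unfolding U2_def U1_eq_sum_attack_payoff[OF assms]
    by (simp add: right_diff_distrib sum_subtractf)
qed

lemma U1_return_pmf:
  assumes "S \<in> A1 V b1" and "set_pmf q \<subseteq> A2 E b2"
  shows "U1 C (return_pmf S) q = defense_payoff q S"
  using assms finite_A1 by (simp add: U1_eq_sum_defense_payoff indicator_def)

lemma U2_return_pmf:
  assumes "set_pmf p \<subseteq> A1 V b1" and "T \<in> A2 E b2"
  shows "U2 C p (return_pmf T) = attack_payoff p T"
  using assms finite_A2 by (simp add: U2_eq_sum_attack_payoff indicator_def)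

lemma detection_prob_le_1:
  assumes "set_pmf p \<subseteq> A1 V b1"
  shows "detection_prob p e \<le> 1"
proof -
  have "detection_prob p e \<le> (\<Sum>S\<in>A1 V b1. pmf p S * 1)"
    unfolding detection_prob_def by (intro sum_mono) simp
  also have "\<dots> = 1"
    using finite_A1 assms by (rule sum_pmf_mult_const)
  finally show ?thesis .
qed

lemma monitored_if_detection_prob_ge_1:
  assumes "set_pmf p \<subseteq> A1 V b1" and "1 \<le> detection_prob p e" and "S \<in> set_pmf p"
  shows "e \<in> CS C S"
proof -
  have "detection_prob p e = 1"
    using assms(2) detection_prob_le_1[OF assms(1), of e] by linarith
  then have "(if e \<in> CS C S then 1 else 0 :: real) = 1"
    using finite_A1 assms(1,3)
    by (intro sum_pmf_mult_eq_bound_on_support[where p = p]) (auto simp: detection_prob_def)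
  then show ?thesis
    by (simp split: if_splits)
qed

lemma attack_payoff_insert:
  "finite T \<Longrightarrow> k \<notin> T \<Longrightarrow> attack_payoff p (insert k T) = attack_payoff p T + (1 - detection_prob p k)"
  by (simp add: attack_payoff_def)

end

locale equilibrium = detection_game V E C b1 b2
  for V :: "'v set" and E :: "'e set" and C b1 b2 +
  fixes \<sigma>1 :: "'v set pmf" and \<sigma>2 :: "'e set pmf"
  assumes NE: "is_NE V E C b1 b2 \<sigma>1 \<sigma>2"
begin

lemma support_defense: "set_pmf \<sigma>1 \<subseteq> A1 V b1"
  and support_attack: "set_pmf \<sigma>2 \<subseteq> A2 E b2"
  using NE by (auto simp: is_NE_def)

lemma defense_payoff_le_U1:
  assumes "S \<in> A1 V b1"
  shows "defense_payoff \<sigma>2 S \<le> U1 C \<sigma>1 \<sigma>2"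
proof -
  have "U1 C (return_pmf S) \<sigma>2 \<le> U1 C \<sigma>1 \<sigma>2"
    using NE assms by (simp add: is_NE_def)
  then show ?thesis
    using U1_return_pmf[OF assms support_attack] by simp
qed

lemma attack_payoff_le_U2:
  assumes "T \<in> A2 E b2"
  shows "attack_payoff \<sigma>1 T \<le> U2 C \<sigma>1 \<sigma>2"
proof -
  have "U2 C \<sigma>1 (return_pmf T) \<le> U2 C \<sigma>1 \<sigma>2"
    using NE assms by (simp add: is_NE_def)
  then show ?thesis
    using U2_return_pmf[OF support_defense assms] by simp
qed

lemma defense_payoff_support: "S \<in> set_pmf \<sigma>1 \<Longrightarrow> defense_payoff \<sigma>2 S = U1 C \<sigma>1 \<sigma>2"
  using finite_A1 support_defense defense_payoff_le_U1
    U1_eq_sum_defense_payoff[OF support_defense support_attack, symmetric]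
  by (rule sum_pmf_mult_eq_bound_on_support)

lemma attack_payoff_support: "T \<in> set_pmf \<sigma>2 \<Longrightarrow> attack_payoff \<sigma>1 T = U2 C \<sigma>1 \<sigma>2"
  using finite_A2 support_attack attack_payoff_le_U2
    U2_eq_sum_attack_payoff[OF support_defense support_attack, symmetric]
  by (rule sum_pmf_mult_eq_bound_on_support)

definition exposed :: "'e set" where
  "exposed = {e\<in>E. detection_prob \<sigma>1 e < 1}"

lemma uncovered_subset_exposed:
  assumes "S \<in> set_pmf \<sigma>1"
  shows "E - CS C S \<subseteq> exposed"
  using monitored_if_detection_prob_ge_1[OF support_defense _ assms]
  by (auto simp: exposed_def) (meson not_less)

lemma attack_support_cases:
  assumes T0: "T0 \<in> set_pmf \<sigma>2"
  shows "exposed \<subseteq> T0 \<or> (card T0 = b2 \<and> T0 \<subseteq> exposed)"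
proof (cases "exposed \<subseteq> T0")
  case False
  then obtain k where k: "k \<in> exposed" "k \<notin> T0"
    by auto
  then have kE: "k \<in> E" and gain: "detection_prob \<sigma>1 k < 1"
    by (auto simp: exposed_def)
  have T0A: "T0 \<in> A2 E b2"
    using T0 support_attack by auto
  then have fin: "finite T0"
    by (rule finite_attack)
  have T0E: "T0 \<subseteq> E" and card_T0: "card T0 \<le> b2"
    using T0A by (auto simp: A2_def)
  have optimal: "attack_payoff \<sigma>1 T \<le> attack_payoff \<sigma>1 T0" if "T \<in> A2 E b2" for T
    using attack_payoff_le_U2[OF that] attack_payoff_support[OF T0] by simp
  have "card T0 = b2"
  proof (rule ccontr)
    assume "card T0 \<noteq> b2"
    then have "insert k T0 \<in> A2 E b2"
      using T0E kE fin k(2) card_T0 by (simp add: A2_def)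
    then show False
      using optimal attack_payoff_insert[OF fin k(2)] gain by fastforce
  qed
  moreover have "T0 \<subseteq> exposed"
  proof
    fix e assume e: "e \<in> T0"
    show "e \<in> exposed"
    proof (rule ccontr)
      assume "e \<notin> exposed"
      then have "detection_prob \<sigma>1 e = 1"
        using e T0E detection_prob_le_1[OF support_defense, of e] by (auto simp: exposed_def)
      then have "attack_payoff \<sigma>1 T0 = attack_payoff \<sigma>1 (T0 - {e})"
        using fin e by (simp add: attack_payoff_def sum.remove)
      moreover have "insert k (T0 - {e}) \<in> A2 E b2"
        using T0E kE fin e k(2) card_T0 card_gt_0_iff[of T0] by (auto simp: A2_def card_insert_if)
      ultimately show False
        using optimal attack_payoff_insert[of "T0 - {e}" k \<sigma>1] fin k(2) gain by fastforce
    qed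
  qed
  ultimately show ?thesis
    by simp
qed simp

text \<open>Swapping \<open>i\<close> for a vertex monitoring \<open>k\<close> detects \<open>k\<close> in every attack and loses at
most the edges privately monitored by \<open>i\<close>; since \<open>S\<close> is a best response, that loss is at
least one edge on average.\<close>

lemma private_cover_share_ge_1:
  assumes S: "S \<in> set_pmf \<sigma>1" and i: "i \<in> S" and k: "k \<in> E - CS C S"
    and attacked: "\<forall>T\<in>set_pmf \<sigma>2. k \<in> T"
  shows "1 \<le> (\<Sum>T\<in>A2 E b2. pmf \<sigma>2 T * card (private_cover C S i \<inter> T))"
proof -
  obtain w where w: "w \<in> V" "k \<in> C w"
    using monitored k by auto
  define S' where "S' = insert w (S - {i})"
  have SA: "S \<in> A1 V b1"
    using S support_defense by auto
  then have fin: "finite S"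
    by (rule finite_defense)
  have SV: "S \<subseteq> V" and card_S: "card S \<le> b1"
    using SA by (auto simp: A1_def)
  have "card S' \<le> card S"
    unfolding S'_def using fin i card_Suc_Diff1[OF fin i] by (simp add: card_insert_if)
  then have S'A: "S' \<in> A1 V b1"
    using SV w(1) card_S by (auto simp: A1_def S'_def)
  have "defense_payoff \<sigma>2 S + 1 = (\<Sum>T\<in>A2 E b2. pmf \<sigma>2 T * (detF C S T + 1))"
    using sum_pmf_mult_const[OF finite_A2 support_attack, of 1]
    by (simp add: defense_payoff_def distrib_left sum.distrib)
  also have "\<dots> \<le> (\<Sum>T\<in>A2 E b2. pmf \<sigma>2 T * (detF C S' T + card (private_cover C S i \<inter> T)))"
  proof (rule sum_pmf_mult_mono)
    fix T assume T: "T \<in> set_pmf \<sigma>2"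
    then have "finite T"
      using support_attack finite_attack by auto
    moreover have "k \<in> T"
      using T attacked by auto
    ultimately have "detF C S T + 1 \<le> detF C S' T + card (private_cover C S i \<inter> T)"
      unfolding S'_def using k w(2) by (intro detF_exchange) auto
    then show "real (detF C S T + 1) \<le> real (detF C S' T + card (private_cover C S i \<inter> T))"
      by (simp only: of_nat_le_iff)
  qed
  also have "\<dots> = defense_payoff \<sigma>2 S' + (\<Sum>T\<in>A2 E b2. pmf \<sigma>2 T * card (private_cover C S i \<inter> T))"
    by (simp add: defense_payoff_def distrib_left sum.distrib)
  finally show ?thesis
    using defense_payoff_le_U1[OF S'A] defense_payoff_support[OF S] by linarith
qed

lemma card_defense_plus_uncovered_le:
  assumes S: "S \<in> set_pmf \<sigma>1" and uncovered: "E - CS C S \<noteq> {}"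
    and attacked: "\<forall>T\<in>set_pmf \<sigma>2. E - CS C S \<subseteq> T"
  shows "card S + card (E - CS C S) \<le> b2"
proof -
  let ?D = "E - CS C S"
  obtain k where k: "k \<in> ?D"
    using uncovered by auto
  have fin: "finite S"
    using S support_defense finite_defense by auto
  have bound: "(\<Sum>i\<in>S. card (private_cover C S i \<inter> T)) + card ?D \<le> b2"
    if T: "T \<in> set_pmf \<sigma>2" for T
  proof -
    have TA: "T \<in> A2 E b2"
      using T support_attack by auto
    then have finT: "finite T"
      by (rule finite_attack)
    have "detF C S T + card ?D = card ((CS C S \<inter> T) \<union> ?D)"
      unfolding detF_def using finT finite_E by (subst card_Un_disjoint) auto
    also have "\<dots> \<le> card T"
      using finT attacked T by (intro card_mono) auto
    also have "\<dots> \<le> b2"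
      using TA by (simp add: A2_def)
    finally show ?thesis
      using sum_card_private_cover_le[OF fin finT, of C] by linarith
  qed
  have k_attacked: "\<forall>T\<in>set_pmf \<sigma>2. k \<in> T"
    using attacked k by auto
  have "real (card S) = (\<Sum>i\<in>S. 1)"
    by simp
  also have "\<dots> \<le> (\<Sum>i\<in>S. \<Sum>T\<in>A2 E b2. pmf \<sigma>2 T * card (private_cover C S i \<inter> T))"
    by (rule sum_mono) (rule private_cover_share_ge_1[OF S _ k k_attacked])
  also have "\<dots> = (\<Sum>T\<in>A2 E b2. pmf \<sigma>2 T * (\<Sum>i\<in>S. card (private_cover C S i \<inter> T)))"
    by (subst sum.swap) (simp add: sum_distrib_left)
  also have "\<dots> \<le> (\<Sum>T\<in>A2 E b2. pmf \<sigma>2 T * (real b2 - card ?D))"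
  proof (rule sum_pmf_mult_mono)
    fix T assume "T \<in> set_pmf \<sigma>2"
    then have "real (\<Sum>i\<in>S. card (private_cover C S i \<inter> T)) + card ?D \<le> b2"
      using bound by (simp only: of_nat_add[symmetric] of_nat_le_iff)
    then show "real (\<Sum>i\<in>S. card (private_cover C S i \<inter> T)) \<le> real b2 - card ?D"
      by linarith
  qed
  also have "\<dots> = real b2 - card ?D"
    using finite_A2 support_attack by (rule sum_pmf_mult_const)
  finally show ?thesis
    by linarith
qed

end

locale small_budget_game = detection_game +
  assumes b1_pos: "0 < b1" and b2_pos: "0 < b2"
    and b1_lt_n_star: "b1 < n_star V E C" and b2_lt_m_star: "b2 < m_star V E C"

locale small_budget_equilibrium =
  small_budget_game V E C b1 b2 + equilibrium V E C b1 b2 \<sigma>1 \<sigma>2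
  for V :: "'v set" and E :: "'e set" and C b1 b2 \<sigma>1 \<sigma>2
begin

lemma card_exposed_ge: "b2 \<le> card exposed"
proof (rule ccontr)
  assume "\<not> b2 \<le> card exposed"
  then have few: "card exposed < b2"
    by simp
  obtain S where S: "S \<in> set_pmf \<sigma>1"
    using set_pmf_not_empty by fast
  have SA: "S \<in> A1 V b1"
    using S support_defense by auto
  then have fin: "finite S"
    by (rule finite_defense)
  have SV: "S \<subseteq> V" and card_S: "card S \<le> b1"
    using SA by (auto simp: A1_def)
  have attacked: "\<forall>T\<in>set_pmf \<sigma>2. E - CS C S \<subseteq> T"
  proof
    fix T assume T: "T \<in> set_pmf \<sigma>2"
    have "finite exposed"
      using finite_E by (simp add: exposed_def)
    then have "card T < b2" if "T \<subseteq> exposed"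
      using card_mono[OF _ that] few by fastforce
    then have "exposed \<subseteq> T"
      using attack_support_cases[OF T] by auto
    then show "E - CS C S \<subseteq> T"
      using uncovered_subset_exposed[OF S] by blast
  qed
  have "E - CS C S \<noteq> {}"
  proof
    assume "E - CS C S = {}"
    then have "set_cover V E C S"
      using SV monitor_subset by (auto simp: set_cover_def CS_def)
    then have "n_star V E C \<le> card S"
      by (rule n_star_le_card)
    then show False
      using card_S b1_lt_n_star by linarith
  qed
  with S attacked have "card S + card (E - CS C S) \<le> b2"
    by (intro card_defense_plus_uncovered_le)
  moreover obtain P where P: "set_packing V E C P" and card_P: "card P = m_star V E C"
    using exists_max_packing by blast
  then have "m_star V E C \<le> card S + card (E - CS C S)"
    using card_packing_le[OF P finite_E fin SV] card_P by linarith
  ultimately show False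
    using b2_lt_m_star by linarith
qed

lemma card_attack_support:
  assumes "T \<in> set_pmf \<sigma>2"
  shows "card T = b2"
  using attack_support_cases[OF assms]
proof
  assume "exposed \<subseteq> T"
  have TA: "T \<in> A2 E b2"
    using assms support_attack by auto
  then have "card exposed \<le> card T"
    using finite_attack \<open>exposed \<subseteq> T\<close> by (intro card_mono)
  moreover have "card T \<le> b2"
    using TA by (simp add: A2_def)
  ultimately show ?thesis
    using card_exposed_ge by linarith
qed simp

lemma U2_eq: "U2 C \<sigma>1 \<sigma>2 = real b2 - U1 C \<sigma>1 \<sigma>2"
  using card_attack_support by (intro U2_eq_minus_U1) auto

lemma detection_rate_eq: "detection_rate C \<sigma>1 \<sigma>2 = U1 C \<sigma>1 \<sigma>2 / real b2"
  using card_attack_support by (intro detection_rate_eq_U1_div) auto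

lemma U1_le_b2: "U1 C \<sigma>1 \<sigma>2 \<le> real b2"
  using attack_payoff_le_U2[of "{}"] by (simp add: A2_def attack_payoff_def U2_eq)

lemma U1_lower_bound: "real b1 * real b2 / real (n_star V E C) \<le> U1 C \<sigma>1 \<sigma>2"
proof -
  obtain Sx where cover: "set_cover V E C Sx" and card_Sx: "card Sx = n_star V E C"
    using exists_min_cover by blast
  let ?n = "n_star V E C"
  let ?X = "{S. S \<subseteq> Sx \<and> card S = b1}" and ?M = "(?n - 1) choose (b1 - 1)"
  have SxV: "Sx \<subseteq> V" and SxE: "CS C Sx = E"
    using cover by (auto simp: set_cover_def)
  have fin: "finite Sx"
    using SxV finite_V by (rule finite_subset)
  have XA: "?X \<subseteq> A1 V b1"
    using SxV by (auto simp: A1_def)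
  have "real b2 * ?M = (\<Sum>T\<in>A2 E b2. pmf \<sigma>2 T * (real b2 * ?M))"
    using finite_A2 support_attack by (rule sum_pmf_mult_const[symmetric])
  also have "\<dots> \<le> (\<Sum>T\<in>A2 E b2. pmf \<sigma>2 T * (\<Sum>S\<in>?X. detF C S T))"
  proof (rule sum_pmf_mult_mono)
    fix T assume T: "T \<in> set_pmf \<sigma>2"
    then have TA: "T \<in> A2 E b2"
      using support_attack by auto
    then have "T \<subseteq> CS C Sx"
      using SxE by (simp add: A2_def)
    from sum_detF_subsets_of_cover_ge[OF fin this finite_attack[OF TA] b1_pos]
    have "card T * ?M \<le> (\<Sum>S\<in>?X. detF C S T)"
      unfolding card_Sx .
    then show "real b2 * ?M \<le> real (\<Sum>S\<in>?X. detF C S T)"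
      using card_attack_support[OF T] by (simp only: of_nat_mult[symmetric] of_nat_le_iff)
  qed
  also have "\<dots> = (\<Sum>S\<in>?X. defense_payoff \<sigma>2 S)"
    unfolding defense_payoff_def by (subst sum.swap) (simp add: sum_distrib_left)
  also have "\<dots> \<le> (\<Sum>S\<in>?X. U1 C \<sigma>1 \<sigma>2)"
    using XA defense_payoff_le_U1 by (intro sum_mono) auto
  finally have averaged: "real b2 * ?M \<le> card ?X * U1 C \<sigma>1 \<sigma>2"
    by simp
  have card_X: "card ?X = ?n choose b1"
    using n_subsets[OF fin] card_Sx by simp
  then have "b1 * card ?X = ?n * ?M"
    using times_binomial_minus1_eq[OF b1_pos] by simp
  moreover have "0 < card ?X"
    unfolding card_X using b1_lt_n_star by simp
  ultimately have "real b1 / ?n = real ?M / card ?X"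
    using b1_lt_n_star by (simp add: frac_eq_eq flip: of_nat_mult)
  then have "real b1 * real b2 / ?n = real b2 * ?M / card ?X"
    by (metis mult.commute times_divide_eq_right)
  also have "\<dots> \<le> U1 C \<sigma>1 \<sigma>2"
    using averaged \<open>0 < card ?X\<close> by (simp add: divide_le_eq mult.commute)
  finally show ?thesis .
qed

lemma U1_upper_bound: "U1 C \<sigma>1 \<sigma>2 \<le> real b1 * real b2 / real (m_star V E C)"
proof -
  obtain P where packing: "set_packing V E C P" and card_P: "card P = m_star V E C"
    using exists_max_packing by blast
  let ?m = "m_star V E C"
  let ?Y = "{T. T \<subseteq> P \<and> card T = b2}" and ?M = "(?m - 1) choose (b2 - 1)"
  have PE: "P \<subseteq> E" and unique: "\<forall>i\<in>V. card (C i \<inter> P) \<le> 1"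
    using packing by (auto simp: set_packing_def)
  have fin: "finite P"
    using PE finite_E by (rule finite_subset)
  have U1_le_detections: "U1 C \<sigma>1 \<sigma>2 \<le> (\<Sum>S\<in>A1 V b1. pmf \<sigma>1 S * detF C S T)"
    if "T \<in> ?Y" for T
  proof -
    have TA: "T \<in> A2 E b2"
      using that PE by (auto simp: A2_def)
    then have "attack_payoff \<sigma>1 T \<le> real b2 - U1 C \<sigma>1 \<sigma>2"
      using attack_payoff_le_U2 U2_eq by simp
    then show ?thesis
      using sum_pmf_detF_eq[OF finite_attack[OF TA]] that by simp
  qed
  have "card ?Y * U1 C \<sigma>1 \<sigma>2 = (\<Sum>T\<in>?Y. U1 C \<sigma>1 \<sigma>2)"
    by simp
  also have "\<dots> \<le> (\<Sum>T\<in>?Y. \<Sum>S\<in>A1 V b1. pmf \<sigma>1 S * detF C S T)"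
    using U1_le_detections by (rule sum_mono)
  also have "\<dots> = (\<Sum>S\<in>A1 V b1. pmf \<sigma>1 S * (\<Sum>T\<in>?Y. detF C S T))"
    by (subst sum.swap) (simp add: sum_distrib_left)
  also have "\<dots> \<le> (\<Sum>S\<in>A1 V b1. pmf \<sigma>1 S * (real b1 * ?M))"
  proof (rule sum_pmf_mult_mono)
    fix S assume "S \<in> set_pmf \<sigma>1"
    then have SA: "S \<in> A1 V b1"
      using support_defense by auto
    then have "\<forall>i\<in>S. card (C i \<inter> P) \<le> 1"
      using unique by (auto simp: A1_def)
    from sum_detF_subsets_of_packing_le[OF fin finite_defense[OF SA] this b2_pos]
    have "(\<Sum>T\<in>?Y. detF C S T) \<le> card S * ?M"
      unfolding card_P .
    also have "\<dots> \<le> b1 * ?M"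
      using SA by (simp add: A1_def)
    finally show "real (\<Sum>T\<in>?Y. detF C S T) \<le> real b1 * ?M"
      by (simp only: of_nat_mult[symmetric] of_nat_le_iff)
  qed
  also have "\<dots> = real b1 * ?M"
    using finite_A1 support_defense by (rule sum_pmf_mult_const)
  finally have averaged: "card ?Y * U1 C \<sigma>1 \<sigma>2 \<le> real b1 * ?M" .
  have card_Y: "card ?Y = ?m choose b2"
    using n_subsets[OF fin] card_P by simp
  then have "b2 * card ?Y = ?m * ?M"
    using times_binomial_minus1_eq[OF b2_pos] by simp
  moreover have "0 < card ?Y"
    unfolding card_Y using b2_lt_m_star by simp
  ultimately have "real b2 / ?m = real ?M / card ?Y"
    using b2_lt_m_star by (simp add: frac_eq_eq flip: of_nat_mult)
  then have "real b1 * real b2 / ?m = real b1 * ?M / card ?Y"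
    by (metis times_divide_eq_right)
  moreover have "U1 C \<sigma>1 \<sigma>2 \<le> real b1 * ?M / card ?Y"
    using averaged \<open>0 < card ?Y\<close> by (simp add: le_divide_eq mult.commute)
  ultimately show ?thesis
    by simp
qed

lemma payoff_bounds:
  "real b1 * real b2 / real (n_star V E C) \<le> U1 C \<sigma>1 \<sigma>2
   \<and> U1 C \<sigma>1 \<sigma>2 \<le> min (real b1 * real b2 / real (m_star V E C)) (real b2)
   \<and> max 0 (real b2 * (1 - real b1 / real (m_star V E C))) \<le> U2 C \<sigma>1 \<sigma>2
   \<and> U2 C \<sigma>1 \<sigma>2 \<le> real b2 * (1 - real b1 / real (n_star V E C))"
proof -
  have "real b2 * (1 - real b1 / x) = real b2 - real b1 * real b2 / x" for x :: real
    by (simp add: algebra_simps)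
  then show ?thesis
    using U1_lower_bound U1_upper_bound U1_le_b2 U2_eq by simp
qed

lemma detection_rate_bounds:
  "real b1 / real (n_star V E C) \<le> detection_rate C \<sigma>1 \<sigma>2
   \<and> detection_rate C \<sigma>1 \<sigma>2 \<le> min (real b1 / real (m_star V E C)) 1"
proof -
  have b2: "0 < real b2"
    using b2_pos by simp
  have scale: "real b1 / x = real b1 * real b2 / x / real b2" for x :: real
    using b2 by simp
  have "real b1 / real (n_star V E C) \<le> U1 C \<sigma>1 \<sigma>2 / real b2"
    unfolding scale[of "real (n_star V E C)"] using U1_lower_bound b2 by (intro divide_right_mono) auto
  moreover have "U1 C \<sigma>1 \<sigma>2 / real b2 \<le> real b1 / real (m_star V E C)"
    unfolding scale[of "real (m_star V E C)"] using U1_upper_bound b2 by (intro divide_right_mono) auto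
  moreover have "U1 C \<sigma>1 \<sigma>2 / real b2 \<le> 1"
    using U1_le_b2 b2 by simp
  ultimately show ?thesis
    unfolding detection_rate_eq by simp
qed

end

context small_budget_game
begin

lemma equilibrium_U1_unique:
  assumes NE\<sigma>: "is_NE V E C b1 b2 \<sigma>1 \<sigma>2" and NE\<tau>: "is_NE V E C b1 b2 \<tau>1 \<tau>2"
  shows "U1 C \<sigma>1 \<sigma>2 = U1 C \<tau>1 \<tau>2"
proof -
  interpret \<sigma>: small_budget_equilibrium V E C b1 b2 \<sigma>1 \<sigma>2
    using NE\<sigma> by unfold_locales
  interpret \<tau>: small_budget_equilibrium V E C b1 b2 \<tau>1 \<tau>2
    using NE\<tau> by unfold_locales
  have "U1 C \<tau>1 \<sigma>2 \<le> U1 C \<sigma>1 \<sigma>2" and "U1 C \<sigma>1 \<tau>2 \<le> U1 C \<tau>1 \<tau>2"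
    using NE\<sigma> NE\<tau> \<sigma>.support_defense \<tau>.support_defense by (auto simp: is_NE_def)
  moreover have "U2 C \<sigma>1 \<tau>2 \<le> U2 C \<sigma>1 \<sigma>2" and "U2 C \<tau>1 \<sigma>2 \<le> U2 C \<tau>1 \<tau>2"
    using NE\<sigma> NE\<tau> \<sigma>.support_attack \<tau>.support_attack by (auto simp: is_NE_def)
  moreover have "U2 C \<sigma>1 \<tau>2 = b2 - U1 C \<sigma>1 \<tau>2" and "U2 C \<tau>1 \<sigma>2 = b2 - U1 C \<tau>1 \<sigma>2"
    using \<tau>.card_attack_support \<sigma>.card_attack_support by (auto intro: U2_eq_minus_U1)
  ultimately show ?thesis
    using \<sigma>.U2_eq \<tau>.U2_eq by linarith
qed

end

theorem theorem1:
  fixes V :: "'v set" and E :: "'e set" and C :: "'v \<Rightarrow> 'e set" and b1 b2 :: nat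
  assumes model: "detection_model V E C"
    and b1_pos: "b1 > 0" and b2_pos: "b2 > 0"
    and b1_lt: "b1 < n_star V E C" and b2_lt: "b2 < m_star V E C"
  shows "(\<forall>\<sigma>1 \<sigma>2 \<tau>1 \<tau>2. is_NE V E C b1 b2 \<sigma>1 \<sigma>2 \<longrightarrow> is_NE V E C b1 b2 \<tau>1 \<tau>2 \<longrightarrow>
            U1 C \<sigma>1 \<sigma>2 = U1 C \<tau>1 \<tau>2 \<and> U2 C \<sigma>1 \<sigma>2 = U2 C \<tau>1 \<tau>2)
       \<and> (\<forall>\<sigma>1 \<sigma>2. is_NE V E C b1 b2 \<sigma>1 \<sigma>2 \<longrightarrow>
            real b1 * real b2 / real (n_star V E C) \<le> U1 C \<sigma>1 \<sigma>2
          \<and> U1 C \<sigma>1 \<sigma>2 \<le> min (real b1 * real b2 / real (m_star V E C)) (real b2)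
          \<and> max 0 (real b2 * (1 - real b1 / real (m_star V E C))) \<le> U2 C \<sigma>1 \<sigma>2
          \<and> U2 C \<sigma>1 \<sigma>2 \<le> real b2 * (1 - real b1 / real (n_star V E C)))
       \<and> (\<forall>\<sigma>1 \<sigma>2 \<tau>1 \<tau>2. is_NE V E C b1 b2 \<sigma>1 \<sigma>2 \<longrightarrow> is_NE V E C b1 b2 \<tau>1 \<tau>2 \<longrightarrow>
            detection_rate C \<sigma>1 \<sigma>2 = detection_rate C \<tau>1 \<tau>2)
       \<and> (\<forall>\<sigma>1 \<sigma>2. is_NE V E C b1 b2 \<sigma>1 \<sigma>2 \<longrightarrow>
            real b1 / real (n_star V E C) \<le> detection_rate C \<sigma>1 \<sigma>2
          \<and> detection_rate C \<sigma>1 \<sigma>2 \<le> min (real b1 / real (m_star V E C)) 1)"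
proof -
  interpret small_budget_game V E C b1 b2
    by unfold_locales (rule assms)+
  have equilibrium: "small_budget_equilibrium V E C b1 b2 \<sigma>1 \<sigma>2"
    if "is_NE V E C b1 b2 \<sigma>1 \<sigma>2" for \<sigma>1 \<sigma>2
    using that by unfold_locales
  note U2_eq = small_budget_equilibrium.U2_eq[OF equilibrium]
    and rate_eq = small_budget_equilibrium.detection_rate_eq[OF equilibrium]
  show ?thesis
    using equilibrium_U1_unique U2_eq rate_eq
      small_budget_equilibrium.payoff_bounds[OF equilibrium]
      small_budget_equilibrium.detection_rate_bounds[OF equilibrium]
    by metis
qed

end
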